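(* Let $\mathscr P$ be a finite collection of finite posets. If $\sum_{P\in\mathscr P}K_P(\mathbf x)$ is a symmetric function, then it is $p$-positive, i.e. it is a linear combination of power sum symmetric functions $p_\lambda$ with nonnegative coefficients.
   Context: For a finite poset $P$, $K_P(\mathbf x)=\sum_f\prod_{x\in P}x_{f(x)}$, summed over all maps $f:P\to\mathbb Z_{>0}$ with $x<_Py\Rightarrow f(x)\le f(y)$; this is a quasisymmetric function in $\mathbf x=(x_1,x_2,\dots)$. $p_\lambda$ denotes the power sum symmetric function. *)

theory Defs
  imports Main "HOL-Library.Multiset" "HOL-Library.FuncSet" Complex_Main
begin

text \<open>Formal power series in the variables x_1, x_2, ... (indexed by positive
naturals) with real coefficients are represented by their coefficient function:
a monomial x_{i_1} x_{i_2} ... x_{i_k} is the multiset {#i_1,...,i_k#} of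
positive naturals, and a series F is the map sending a monomial to its
coefficient.\<close>

type_synonym series = "nat multiset \<Rightarrow> real"

definition K_poset :: "'a set \<Rightarrow> 'a rel \<Rightarrow> series" where
  "K_poset A R m = real (card {f \<in> A \<rightarrow>\<^sub>E {0<..}.
       (\<forall>x\<in>A. \<forall>y\<in>A. (x, y) \<in> R \<and> x \<noteq> y \<longrightarrow> f x \<le> f y)
       \<and> image_mset f (mset_set A) = m})"

definition series_mult :: "series \<Rightarrow> series \<Rightarrow> series" where
  "series_mult F G m = (\<Sum>m1\<in>{m1. m1 \<subseteq># m}. F m1 * G (m - m1))"

definition series_one :: series where
  "series_one m = (if m = {#} then 1 else 0)"

definition power_sum :: "nat \<Rightarrow> series" where
  "power_sum k m = (if \<exists>i>0. m = replicate_mset k i then 1 else 0)"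

fun power_sum_list :: "nat list \<Rightarrow> series" where
  "power_sum_list [] = series_one"
| "power_sum_list (k # ks) = series_mult (power_sum k) (power_sum_list ks)"

definition power_sum_part :: "nat multiset \<Rightarrow> series" where
  "power_sum_part lam = power_sum_list (sorted_list_of_multiset lam)"

definition is_partition :: "nat multiset \<Rightarrow> bool" where
  "is_partition lam \<longleftrightarrow> 0 \<notin># lam"

definition symmetric_series :: "series \<Rightarrow> bool" where
  "symmetric_series F \<longleftrightarrow>
     (\<forall>\<sigma>. bij_betw \<sigma> {0<..} {0<..} \<longrightarrow>
        (\<forall>m. set_mset m \<subseteq> {0<..} \<longrightarrow> F (image_mset \<sigma> m) = F m))"

definition p_positive :: "series \<Rightarrow> bool" where
  "p_positive F \<longleftrightarrow> (\<exists>S c. finite S \<and> (\<forall>lam\<in>S. is_partition lam \<and> c lam \<ge> (0::real))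
       \<and> F = (\<lambda>m. \<Sum>lam\<in>S. c lam * power_sum_part lam m))"

end

theory Submission
  imports Defs
begin

text \<open>
  Work with weighted posets (X, R, w): the coefficient of a monomial m in K_(X,R,w) counts the
  order-preserving f : X \<rightarrow> \<nat> whose monomial \<Prod>x\<in>X. x_{f x}^{w x} is m.  K_P is the case w = 1,
  and p_lam is the case of an antichain whose weights are the parts of lam.

  For a composition alpha, the linear functional phi_alpha sends F to the sum, over compositions
  g_i of alpha_i, of \<Prod>_i (-1)^{l(g_i)-1} last(g_i) times the coefficient of x_1^{c_1} x_2^{c_2} ...
  in F, where c = g_1 @ g_2 @ ....  Splitting a P-partition along the order ideal of its small
  values, together with the cancellation \<Sum>_E \<Sum>_g (-1)^{l(g)} [x^g] K_E = [X = {}] over the order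
  ideals E of X, shows that phi_alpha(K_(X,R,w)) is a sum over chains of order ideals whose
  successive layers have weights alpha_1, alpha_2, ... and each have a minimum, weighted by the
  weights of these minima.  Hence it is nonnegative, and for an antichain with weights lam it is
  positive exactly when lam = alpha.

  A symmetric series of bounded degree is a combination \<Sum> c_lam p_lam, by triangularity of the
  p_lam at the canonical monomials x_1^{lam_1} x_2^{lam_2} ....  Applying phi_mu to
  \<Sum>_P K_P = \<Sum> c_lam p_lam gives a nonnegative number on the left and c_mu times a positive number
  on the right.
\<close>

definition weighted_image :: "'a set \<Rightarrow> ('a \<Rightarrow> nat) \<Rightarrow> ('a \<Rightarrow> 'b) \<Rightarrow> 'b multiset" where
  "weighted_image X w f = (\<Sum>x\<in>X. replicate_mset (w x) (f x))"

lemma weighted_image_cong: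
  "(\<And>x. x \<in> X \<Longrightarrow> f x = g x) \<Longrightarrow> weighted_image X w f = weighted_image X w g"
  unfolding weighted_image_def by (rule sum.cong) auto

lemma weighted_image_restrict [simp]: "weighted_image X w (restrict f X) = weighted_image X w f"
  by (rule weighted_image_cong) simp

lemma weighted_image_split:
  "finite X \<Longrightarrow> D \<subseteq> X \<Longrightarrow> weighted_image X w f = weighted_image D w f + weighted_image (X - D) w f"
  unfolding weighted_image_def by (metis sum.subset_diff add.commute)

lemma size_weighted_image: "size (weighted_image X w f) = sum w X"
  unfolding weighted_image_def by simp

lemma count_weighted_image: "count (weighted_image X w f) v = (\<Sum>x\<in>X. if f x = v then w x else 0)"
  unfolding weighted_image_def count_sum by (rule sum.cong) auto

lemma image_mset_weighted_image: "image_mset g (weighted_image X w f) = weighted_image X w (g \<circ> f)"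
  unfolding weighted_image_def by (induction X rule: infinite_finite_induct) auto

lemma set_mset_weighted_image:
  assumes "finite X" "\<forall>x\<in>X. w x > 0"
  shows "set_mset (weighted_image X w f) = f ` X"
proof
  show "set_mset (weighted_image X w f) \<subseteq> f ` X"
    unfolding weighted_image_def by (induction X rule: infinite_finite_induct) auto
  show "f ` X \<subseteq> set_mset (weighted_image X w f)"
  proof
    fix v assume "v \<in> f ` X"
    then obtain x where x: "x \<in> X" "f x = v" by blast
    have "w x \<le> (\<Sum>y\<in>X. if f y = v then w y else 0)"
      using member_le_sum[of x X "\<lambda>y. if f y = v then w y else 0"] assms(1) x by simp
    moreover have "w x > 0" using assms(2) x(1) by blast
    ultimately show "v \<in># weighted_image X w f"
      by (simp add: count_weighted_image flip: count_greater_zero_iff)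
  qed
qed

lemma filter_weighted_image:
  assumes "finite X"
  shows "filter_mset P (weighted_image X w f) = weighted_image {x\<in>X. P (f x)} w f"
proof (rule multiset_eqI)
  fix v
  show "count (filter_mset P (weighted_image X w f)) v = count (weighted_image {x\<in>X. P (f x)} w f) v"
    using assms by (cases "P v") (auto simp: count_weighted_image sum.inter_filter intro!: sum.cong)
qed

lemma weighted_image_const: "finite X \<Longrightarrow> weighted_image X w (\<lambda>_. v) = replicate_mset (sum w X) v"
  by (rule multiset_eqI) (simp add: count_weighted_image)

lemma weighted_image_lessThan_Suc:
  "weighted_image {..<Suc n} (nth (k # ks)) f =
    replicate_mset k (f 0) + weighted_image {..<n} (nth ks) (\<lambda>j. f (Suc j))"
  unfolding weighted_image_def sum.lessThan_Suc_shift by simp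

lemma weighted_image_one: "weighted_image A (\<lambda>_. 1) f = image_mset f (mset_set A)"
  unfolding weighted_image_def by (induction A rule: infinite_finite_induct) auto

definition order_preserving :: "'a set \<Rightarrow> 'a rel \<Rightarrow> ('a \<Rightarrow> nat) \<Rightarrow> bool" where
  "order_preserving X R f \<longleftrightarrow> (\<forall>x\<in>X. \<forall>y\<in>X. (x, y) \<in> R \<and> x \<noteq> y \<longrightarrow> f x \<le> f y)"

definition P_partitions :: "'a set \<Rightarrow> 'a rel \<Rightarrow> ('a \<Rightarrow> nat) \<Rightarrow> nat multiset \<Rightarrow> ('a \<Rightarrow> nat) set" where
  "P_partitions X R w m = {f \<in> X \<rightarrow>\<^sub>E UNIV. order_preserving X R f \<and> weighted_image X w f = m}"

definition num_P_partitions :: "'a set \<Rightarrow> 'a rel \<Rightarrow> ('a \<Rightarrow> nat) \<Rightarrow> nat multiset \<Rightarrow> nat" where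
  "num_P_partitions X R w m = card (P_partitions X R w m)"

definition order_ideals :: "'a set \<Rightarrow> 'a rel \<Rightarrow> 'a set set" where
  "order_ideals X R = {D. D \<subseteq> X \<and> (\<forall>x\<in>X. \<forall>y\<in>D. (x, y) \<in> R \<and> x \<noteq> y \<longrightarrow> x \<in> D)}"

lemma finite_order_ideals: "finite X \<Longrightarrow> finite (order_ideals X R)"
  by (rule finite_subset[of _ "Pow X"]) (auto simp: order_ideals_def)

lemma order_ideals_subset: "D \<in> order_ideals X R \<Longrightarrow> D \<subseteq> X"
  by (simp add: order_ideals_def)

lemma self_in_order_ideals: "X \<in> order_ideals X R"
  by (auto simp: order_ideals_def)

lemma order_ideals_empty: "order_ideals {} R = {{}}"
  by (auto simp: order_ideals_def)

lemma order_ideals_empty_rel: "order_ideals X {} = Pow X"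
  by (auto simp: order_ideals_def)

lemma order_preserving_restrict [simp]:
  "order_preserving X R (restrict f X) \<longleftrightarrow> order_preserving X R f"
  by (simp add: order_preserving_def)

lemma P_partitions_value:
  assumes "f \<in> P_partitions X R w m" "finite X" "\<forall>x\<in>X. w x > 0" "x \<in> X"
  shows "f x \<in># m"
  using assms set_mset_weighted_image[of X w f] by (auto simp: P_partitions_def)

lemma P_partitions_extensional: "f \<in> P_partitions X R w m \<Longrightarrow> x \<notin> X \<Longrightarrow> f x = undefined"
  by (auto simp: P_partitions_def PiE_def extensional_def)

lemma finite_P_partitions:
  assumes "finite X" "\<forall>x\<in>X. w x > 0"
  shows "finite (P_partitions X R w m)"
proof (rule finite_subset)
  show "P_partitions X R w m \<subseteq> X \<rightarrow>\<^sub>E set_mset m"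
    using P_partitions_value[OF _ assms] by (auto simp: P_partitions_def)
  show "finite (X \<rightarrow>\<^sub>E set_mset m)" using assms by (simp add: finite_PiE)
qed

lemma num_P_partitions_size_neq:
  assumes "size m \<noteq> sum w X"
  shows "num_P_partitions X R w m = 0"
proof -
  have "P_partitions X R w m = {}"
    using assms size_weighted_image[of X w] by (auto simp: P_partitions_def)
  then show ?thesis by (simp add: num_P_partitions_def)
qed

lemma num_P_partitions_empty: "num_P_partitions {} R w {#} = 1"
proof -
  have "P_partitions {} R w {#} = {\<lambda>_. undefined}"
    by (auto simp: P_partitions_def order_preserving_def weighted_image_def)
  then show ?thesis by (simp add: num_P_partitions_def)
qed

lemma num_P_partitions_replicate:
  assumes X: "finite X" and w: "\<forall>x\<in>X. w x > 0"
  shows "num_P_partitions X R w (replicate_mset c v) = (if sum w X = c then 1 else 0)"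
proof -
  have "P_partitions X R w (replicate_mset c v) =
      (if sum w X = c then {restrict (\<lambda>_. v) X} else {})"
  proof (intro equalityI subsetI)
    fix f assume f: "f \<in> P_partitions X R w (replicate_mset c v)"
    have "f = restrict (\<lambda>_. v) X"
    proof
      fix x show "f x = restrict (\<lambda>_. v) X x"
        using P_partitions_value[OF f X w] P_partitions_extensional[OF f]
        by (cases "x \<in> X") (fastforce split: if_splits)+
    qed
    moreover have "sum w X = c"
      using f size_weighted_image[of X w f] by (simp add: P_partitions_def)
    ultimately show "f \<in> (if sum w X = c then {restrict (\<lambda>_. v) X} else {})" by simp
  qed (auto simp: P_partitions_def order_preserving_def weighted_image_const[OF X] split: if_splits)
  then show ?thesis by (simp add: num_P_partitions_def)
qed

lemma num_P_partitions_image_mset: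
  assumes X: "finite X" and w: "\<forall>x\<in>X. w x > 0" and inj: "inj_on s (set_mset m)"
    and ord: "\<And>f. f \<in> X \<rightarrow> set_mset m \<Longrightarrow> order_preserving X R (s \<circ> f) \<longleftrightarrow> order_preserving X R f"
  shows "num_P_partitions X R w (image_mset s m) = num_P_partitions X R w m"
proof -
  define t where "t = the_inv_into (set_mset m) s"
  let ?A = "P_partitions X R w m" and ?B = "P_partitions X R w (image_mset s m)"
  have valA: "f \<in> X \<rightarrow> set_mset m" if "f \<in> ?A" for f
    using P_partitions_value[OF that X w] by blast
  have valB: "f \<in> X \<rightarrow> s ` set_mset m" if "f \<in> ?B" for f
    using P_partitions_value[OF that X w] by auto
  have ts: "t (s v) = v" if "v \<in># m" for v
    using that by (simp add: t_def the_inv_into_f_f[OF inj])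
  have st: "s (t u) = u" if "u \<in> s ` set_mset m" for u
    using that by (simp add: t_def f_the_inv_into_f[OF inj])
  have "bij_betw (\<lambda>f. restrict (s \<circ> f) X) ?A ?B"
  proof (rule bij_betwI[where g="\<lambda>f. restrict (t \<circ> f) X"])
    show "(\<lambda>f. restrict (s \<circ> f) X) \<in> ?A \<rightarrow> ?B"
    proof
      fix f assume f: "f \<in> ?A"
      then show "restrict (s \<circ> f) X \<in> ?B" using ord[OF valA[OF f]]
        by (auto simp: P_partitions_def image_mset_weighted_image order_preserving_def)
    qed
    show "(\<lambda>f. restrict (t \<circ> f) X) \<in> ?B \<rightarrow> ?A"
    proof
      fix f assume f: "f \<in> ?B"
      have tf: "t \<circ> f \<in> X \<rightarrow> set_mset m"
        using valB[OF f] the_inv_into_into[OF inj, of _ "set_mset m"] by (fastforce simp: t_def)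
      have "weighted_image X w (t \<circ> f) = image_mset t (image_mset s m)"
        using f by (simp add: P_partitions_def flip: image_mset_weighted_image)
      also have "\<dots> = m" by (simp add: multiset.map_comp ts image_mset_cong[of m "t \<circ> s" id])
      finally have "weighted_image X w (t \<circ> f) = m" .
      moreover have "order_preserving X R (s \<circ> (t \<circ> f))"
        using f st valB[OF f] by (auto simp: P_partitions_def order_preserving_def Pi_iff)
      ultimately show "restrict (t \<circ> f) X \<in> ?A" using ord[OF tf] by (simp add: P_partitions_def)
    qed
    show "restrict (t \<circ> restrict (s \<circ> f) X) X = f" if "f \<in> ?A" for f
      using ts valA[OF that] P_partitions_extensional[OF that] by fastforce
    show "restrict (s \<circ> restrict (t \<circ> f) X) X = f" if "f \<in> ?B" for f
      using st valB[OF that] P_partitions_extensional[OF that] by fastforce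
  qed
  then show ?thesis unfolding num_P_partitions_def by (rule bij_betw_same_card[symmetric])
qed

lemma num_P_partitions_shift:
  assumes "finite X" "\<forall>x\<in>X. w x > 0"
  shows "num_P_partitions X R w (image_mset (\<lambda>v. v + t) m) = num_P_partitions X R w m"
  by (rule num_P_partitions_image_mset[OF assms]) (auto simp: order_preserving_def)

lemma num_P_partitions_antichain_image_mset:
  assumes "finite X" "\<forall>x\<in>X. w x > 0" "inj_on s (set_mset m)"
  shows "num_P_partitions X {} w (image_mset s m) = num_P_partitions X {} w m"
  by (rule num_P_partitions_image_mset[OF assms]) (simp add: order_preserving_def)

subsection \<open>Splitting a P-partition at a threshold value\<close>

lemma filter_mset_threshold:
  assumes "\<forall>v\<in>#A. v \<le> k" "\<forall>v\<in>#B. k < (v::nat)"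
  shows "filter_mset (\<lambda>v. v \<le> k) (A + B) = A" "filter_mset (\<lambda>v. \<not> v \<le> k) (A + B) = B"
proof -
  have "filter_mset (\<lambda>v. v \<le> k) A = A" "filter_mset (\<lambda>v. \<not> v \<le> k) B = B"
    using assms by (auto simp: filter_mset_eq_conv not_le)
  moreover have "filter_mset (\<lambda>v. v \<le> k) B = {#}" "filter_mset (\<lambda>v. \<not> v \<le> k) A = {#}"
    using assms by auto
  ultimately show "filter_mset (\<lambda>v. v \<le> k) (A + B) = A" "filter_mset (\<lambda>v. \<not> v \<le> k) (A + B) = B"
    by simp_all
qed

lemma P_partitions_restrict_threshold:
  assumes X: "finite X" and f: "f \<in> P_partitions X R w (A + B)"
    and A: "\<forall>v\<in>#A. v \<le> k" and B: "\<forall>v\<in>#B. k < v"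
  defines "D \<equiv> {x\<in>X. f x \<le> k}"
  shows "D \<in> order_ideals X R" "restrict f D \<in> P_partitions D R w A"
    "restrict f (X - D) \<in> P_partitions (X - D) R w B"
proof -
  have ord: "order_preserving X R f" and im: "weighted_image X w f = A + B"
    using f by (auto simp: P_partitions_def)
  show "D \<in> order_ideals X R"
    using ord unfolding order_ideals_def order_preserving_def D_def by force
  have "weighted_image D w f = filter_mset (\<lambda>v. v \<le> k) (weighted_image X w f)"
    by (simp add: D_def filter_weighted_image[OF X])
  also have "\<dots> = A" unfolding im by (rule filter_mset_threshold(1)[OF A B])
  finally have "weighted_image D w f = A" .
  then show "restrict f D \<in> P_partitions D R w A"
    using ord by (auto simp: P_partitions_def order_preserving_def D_def)
  have "X - D = {x\<in>X. \<not> f x \<le> k}" by (auto simp: D_def)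
  then have "weighted_image (X - D) w f = filter_mset (\<lambda>v. \<not> v \<le> k) (weighted_image X w f)"
    by (simp add: filter_weighted_image[OF X])
  also have "\<dots> = B" unfolding im by (rule filter_mset_threshold(2)[OF A B])
  finally have "weighted_image (X - D) w f = B" .
  then show "restrict f (X - D) \<in> P_partitions (X - D) R w B"
    using ord by (auto simp: P_partitions_def order_preserving_def)
qed

lemma order_preserving_glue:
  assumes D: "D \<in> order_ideals X R" and f1: "order_preserving D R f1"
    and f2: "order_preserving (X - D) R f2"
    and le: "\<And>x y. x \<in> D \<Longrightarrow> y \<in> X - D \<Longrightarrow> f1 x \<le> f2 y"
  shows "order_preserving X R (\<lambda>x. if x \<in> D then f1 x else f2 x)"
  unfolding order_preserving_def
proof (intro ballI impI)
  fix x y assume xy: "x \<in> X" "y \<in> X" "(x, y) \<in> R \<and> x \<noteq> y"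
  consider "y \<in> D" | "x \<in> D" "y \<notin> D" | "x \<notin> D" "y \<notin> D" by blast
  then show "(if x \<in> D then f1 x else f2 x) \<le> (if y \<in> D then f1 y else f2 y)"
  proof cases
    case 1
    then have "x \<in> D" using D xy by (auto simp: order_ideals_def)
    then show ?thesis using 1 f1 xy by (simp add: order_preserving_def)
  next
    case 2
    then show ?thesis using le xy by simp
  next
    case 3
    then show ?thesis using f2 xy by (simp add: order_preserving_def)
  qed
qed

lemma P_partitions_glue_threshold:
  assumes X: "finite X" and w: "\<forall>x\<in>X. w x > 0" and D: "D \<in> order_ideals X R"
    and f1: "f1 \<in> P_partitions D R w A" and f2: "f2 \<in> P_partitions (X - D) R w B"
    and A: "\<forall>v\<in>#A. v \<le> k" and B: "\<forall>v\<in>#B. k < v"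
  defines "g \<equiv> \<lambda>x. if x \<in> D then f1 x else f2 x"
  shows "g \<in> P_partitions X R w (A + B)" "{x\<in>X. g x \<le> k} = D"
proof -
  have DX: "D \<subseteq> X" using D by (rule order_ideals_subset)
  have low: "f1 x \<le> k" if "x \<in> D" for x
    using P_partitions_value[OF f1 finite_subset[OF DX X]] w DX that A by blast
  have high: "k < f2 x" if "x \<in> X - D" for x
    using P_partitions_value[OF f2] X w that B by blast
  show "{x\<in>X. g x \<le> k} = D"
  proof (intro equalityI subsetI)
    fix x assume "x \<in> {x\<in>X. g x \<le> k}"
    then show "x \<in> D" using high[of x] by (cases "x \<in> D") (auto simp: g_def)
  qed (use low DX g_def in auto)
  have "order_preserving X R g"
    unfolding g_def
  proof (rule order_preserving_glue[OF D])
    show "order_preserving D R f1" "order_preserving (X - D) R f2"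
      using f1 f2 by (simp_all add: P_partitions_def)
    show "f1 x \<le> f2 y" if "x \<in> D" "y \<in> X - D" for x y
      using low[OF that(1)] high[OF that(2)] by simp
  qed
  moreover have "weighted_image X w g = A + B"
  proof -
    have "weighted_image X w g = weighted_image D w g + weighted_image (X - D) w g"
      using weighted_image_split[OF X DX] .
    also have "weighted_image D w g = weighted_image D w f1"
      by (rule weighted_image_cong) (simp add: g_def)
    also have "weighted_image (X - D) w g = weighted_image (X - D) w f2"
      by (rule weighted_image_cong) (simp add: g_def)
    finally show ?thesis using f1 f2 by (simp add: P_partitions_def)
  qed
  moreover have "g \<in> X \<rightarrow>\<^sub>E UNIV"
    using P_partitions_extensional[OF f2] DX by (auto simp: g_def PiE_def extensional_def)
  ultimately show "g \<in> P_partitions X R w (A + B)" by (simp add: P_partitions_def)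
qed

lemma num_P_partitions_split_threshold:
  assumes X: "finite X" and w: "\<forall>x\<in>X. w x > 0"
    and A: "\<forall>v\<in>#A. v \<le> k" and B: "\<forall>v\<in>#B. k < v"
  shows "num_P_partitions X R w (A + B) =
    (\<Sum>D\<in>order_ideals X R. num_P_partitions D R w A * num_P_partitions (X - D) R w B)"
proof -
  define T where
    "T = Sigma (order_ideals X R) (\<lambda>D. P_partitions D R w A \<times> P_partitions (X - D) R w B)"
  define cut where
    "cut f = ({x\<in>X. f x \<le> k}, restrict f {x\<in>X. f x \<le> k}, restrict f (X - {x\<in>X. f x \<le> k}))"
    for f :: "'a \<Rightarrow> nat"
  define glue where "glue = (\<lambda>(D, f1, f2) (x::'a). if x \<in> D then f1 x else f2 x :: nat)"
  have "bij_betw cut (P_partitions X R w (A + B)) T"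
  proof (rule bij_betwI[where g=glue])
    show "cut \<in> P_partitions X R w (A + B) \<rightarrow> T"
      using P_partitions_restrict_threshold[OF X _ A B] by (auto simp: cut_def T_def)
    show "glue \<in> T \<rightarrow> P_partitions X R w (A + B)"
      using P_partitions_glue_threshold[OF X w _ _ _ A B] by (auto simp: glue_def T_def)
    show "glue (cut f) = f" if "f \<in> P_partitions X R w (A + B)" for f
      using P_partitions_extensional[OF that] by (auto simp: glue_def cut_def)
    show "cut (glue t) = t" if "t \<in> T" for t
    proof -
      obtain D f1 f2 where t: "t = (D, f1, f2)" and D: "D \<in> order_ideals X R"
        and f1: "f1 \<in> P_partitions D R w A" and f2: "f2 \<in> P_partitions (X - D) R w B"
        using \<open>t \<in> T\<close> by (auto simp: T_def)
      have "{x\<in>X. glue t x \<le> k} = D"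
        using P_partitions_glue_threshold[OF X w D f1 f2 A B] by (simp add: glue_def t)
      then show ?thesis
        using P_partitions_extensional[OF f1] P_partitions_extensional[OF f2]
        by (auto simp: cut_def glue_def t fun_eq_iff)
    qed
  qed
  then have "num_P_partitions X R w (A + B) = card T"
    unfolding num_P_partitions_def by (rule bij_betw_same_card)
  also have "\<dots> = (\<Sum>D\<in>order_ideals X R. card (P_partitions D R w A \<times> P_partitions (X - D) R w B))"
    unfolding T_def using X w
    by (intro card_SigmaI finite_order_ideals ballI finite_cartesian_product finite_P_partitions)
       (auto dest!: order_ideals_subset intro: finite_subset)
  finally show ?thesis by (simp add: num_P_partitions_def card_cartesian_product)
qed

text \<open>comp_monomial s [b_1, ..., b_k] is the monomial x_{s+1}^{b_1} ... x_{s+k}^{b_k}.\<close>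

fun comp_monomial :: "nat \<Rightarrow> nat list \<Rightarrow> nat multiset" where
  "comp_monomial s [] = {#}"
| "comp_monomial s (b # bs) = replicate_mset b (Suc s) + comp_monomial (Suc s) bs"

lemma comp_monomial_append:
  "comp_monomial s (xs @ ys) = comp_monomial s xs + comp_monomial (s + length xs) ys"
  by (induction xs arbitrary: s) auto

lemma comp_monomial_bounds: "v \<in># comp_monomial s xs \<Longrightarrow> s < v \<and> v \<le> s + length xs"
proof (induction xs arbitrary: s)
  case (Cons a xs)
  then show ?case
    by (cases "v \<in># comp_monomial (Suc s) xs") (fastforce split: if_splits)+
qed simp

lemma size_comp_monomial: "size (comp_monomial s xs) = sum_list xs"
  by (induction xs arbitrary: s) auto

lemma comp_monomial_shift: "comp_monomial (s + t) xs = image_mset (\<lambda>v. v + t) (comp_monomial s xs)"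
  by (induction xs arbitrary: s) (auto simp flip: add_Suc)

lemma comp_monomial_eq_weighted_image:
  "comp_monomial s xs = weighted_image {..<length xs} (nth xs) (\<lambda>i. Suc (s + i))"
proof (induction xs arbitrary: s)
  case (Cons x xs)
  then show ?case by (simp add: weighted_image_lessThan_Suc)
qed (simp add: weighted_image_def)

definition P_coeff :: "'a set \<Rightarrow> 'a rel \<Rightarrow> ('a \<Rightarrow> nat) \<Rightarrow> nat list \<Rightarrow> real" where
  "P_coeff X R w b = real (num_P_partitions X R w (comp_monomial 0 b))"

lemma P_coeff_append:
  assumes X: "finite X" and w: "\<forall>x\<in>X. w x > 0"
  shows "P_coeff X R w (g @ b) = (\<Sum>D\<in>order_ideals X R. P_coeff D R w g * P_coeff (X - D) R w b)"
proof -
  have shift: "num_P_partitions (X - D) R w (comp_monomial (length g) b) =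
      num_P_partitions (X - D) R w (comp_monomial 0 b)" for D
    using comp_monomial_shift[of 0 "length g" b] num_P_partitions_shift[of "X - D" w] X w by simp
  have "num_P_partitions X R w (comp_monomial 0 g + comp_monomial (length g) b) =
    (\<Sum>D\<in>order_ideals X R. num_P_partitions D R w (comp_monomial 0 g) *
        num_P_partitions (X - D) R w (comp_monomial (length g) b))"
    by (rule num_P_partitions_split_threshold[OF X w]) (auto dest: comp_monomial_bounds)
  then show ?thesis unfolding P_coeff_def comp_monomial_append shift by simp
qed

lemma P_coeff_eq_0: "sum_list b \<noteq> sum w X \<Longrightarrow> P_coeff X R w b = 0"
  by (simp add: P_coeff_def num_P_partitions_size_neq size_comp_monomial)

lemma P_coeff_Nil:
  assumes "finite X" "\<forall>x\<in>X. w x > 0"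
  shows "P_coeff X R w [] = (if X = {} then 1 else 0)"
proof (cases "X = {}")
  case False
  then have "sum w X \<noteq> sum_list []" using sum_pos[OF assms(1) False, of w] assms(2) by simp
  then show ?thesis using False by (simp add: P_coeff_eq_0)
qed (simp add: P_coeff_def num_P_partitions_empty)

lemma P_coeff_single:
  assumes "finite X" "\<forall>x\<in>X. w x > 0"
  shows "P_coeff X R w [c] = (if sum w X = c then 1 else 0)"
  using num_P_partitions_replicate[OF assms, of R c 1] by (simp add: P_coeff_def)

lemma P_coeff_snoc:
  assumes "finite X" "\<forall>x\<in>X. w x > 0"
  shows "P_coeff X R w (g @ [c]) =
    (\<Sum>D\<in>order_ideals X R. if sum w (X - D) = c then P_coeff D R w g else 0)"
  using assms by (simp add: P_coeff_append P_coeff_single if_distrib cong: if_cong)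

definition compositions :: "nat \<Rightarrow> nat list set" where
  "compositions a = {g. 0 \<notin> set g \<and> sum_list g = a}"

lemma finite_compositions: "finite (compositions a)"
proof (rule finite_subset)
  have "length g \<le> sum_list g" if "0 \<notin> set g" for g :: "nat list"
    using that by (induction g) (auto simp: Suc_le_eq)
  then show "compositions a \<subseteq> {xs. set xs \<subseteq> {0..a} \<and> length xs \<le> a}"
    unfolding compositions_def using member_le_sum_list by fastforce
  show "finite {xs. set xs \<subseteq> {0..a} \<and> length xs \<le> a}"
    by (rule finite_lists_length_le) simp
qed

lemma compositions_Nil: "g \<in> compositions a \<Longrightarrow> g = [] \<longleftrightarrow> a = 0"
  by (cases g) (auto simp: compositions_def)

lemma compositions_0: "compositions 0 = {[]}"
  using compositions_Nil by (auto simp: compositions_def)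

lemma sum_compositions_snoc:
  assumes "a > 0"
  shows "(\<Sum>d\<in>compositions a. h d) = (\<Sum>c\<in>{1..a}. \<Sum>g\<in>compositions (a - c). h (g @ [c]))"
proof -
  define snoc where "snoc p = snd p @ [fst p]" for p :: "nat \<times> nat list"
  define S where "S = Sigma {1..a} (\<lambda>c. compositions (a - c))"
  have "(\<Sum>c\<in>{1..a}. \<Sum>g\<in>compositions (a - c). h (g @ [c])) = (\<Sum>(c, g)\<in>S. h (g @ [c]))"
    unfolding S_def by (rule sum.Sigma) (auto simp: finite_compositions)
  also have "\<dots> = (\<Sum>p\<in>S. h (snoc p))" by (simp add: snoc_def case_prod_beta)
  also have "\<dots> = (\<Sum>d\<in>snoc ` S. h d)"
    by (rule sum.reindex[symmetric, unfolded comp_def]) (auto simp: inj_on_def snoc_def)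
  also have "snoc ` S = compositions a"
  proof (intro equalityI subsetI)
    fix d assume d: "d \<in> compositions a"
    then have "d \<noteq> []" using compositions_Nil assms by blast
    then have dd: "d = butlast d @ [last d]" and l: "last d \<in> set d" by simp_all
    have sum: "sum_list (butlast d) + last d = a"
      using d by (subst (asm) dd) (simp add: compositions_def)
    have "last d \<noteq> 0" using d l unfolding compositions_def by (metis mem_Collect_eq)
    then have "last d \<in> {1..a}" using sum by simp
    moreover have "butlast d \<in> compositions (a - last d)"
      using d sum in_set_butlastD unfolding compositions_def by fastforce
    ultimately have "(last d, butlast d) \<in> S" unfolding S_def by (rule SigmaI)
    then show "d \<in> snoc ` S" by (rule rev_image_eqI) (simp add: snoc_def dd[symmetric])
  next
    fix d assume "d \<in> snoc ` S"
    then obtain c g where "c \<le> a" "g \<in> compositions (a - c)" "d = g @ [c]" "c \<noteq> 0"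
      by (auto simp: S_def snoc_def)
    then show "d \<in> compositions a" by (simp add: compositions_def)
  qed
  finally show ?thesis by simp
qed

subsection \<open>An alternating sum over compositions\<close>

lemma order_ideal_complement_weight:
  fixes w :: "'a \<Rightarrow> nat"
  assumes Q: "finite Q" and w: "\<forall>x\<in>Q. w x > 0" and E: "E \<in> order_ideals Q R"
  shows "sum w (Q - E) \<in> {1..sum w Q} \<longleftrightarrow> E \<noteq> Q" "sum w Q - sum w (Q - E) = sum w E"
proof -
  have EQ: "E \<subseteq> Q" using E by (rule order_ideals_subset)
  have "sum w (Q - E) = sum w Q - sum w E" by (rule sum_diff_nat[OF finite_subset[OF EQ Q] EQ])
  moreover have "sum w E \<le> sum w Q" by (rule sum_mono2[OF Q EQ]) simp
  moreover have "sum w (Q - E) > 0 \<longleftrightarrow> E \<noteq> Q"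
  proof
    assume "E \<noteq> Q"
    then have "Q - E \<noteq> {}" using EQ by auto
    then show "sum w (Q - E) > 0" using sum_pos[of "Q - E" w] Q w by auto
  qed auto
  ultimately show "sum w (Q - E) \<in> {1..sum w Q} \<longleftrightarrow> E \<noteq> Q" "sum w Q - sum w (Q - E) = sum w E"
    by auto
qed

text \<open>The last part of a composition of w(Q) is the weight of the top layer Q - E of an order
  ideal E of Q (P_coeff_snoc).\<close>

lemma sum_compositions_split_last:
  assumes Q: "finite Q" and w: "\<forall>x\<in>Q. w x > 0" and ne: "Q \<noteq> {}"
  shows "(\<Sum>d\<in>compositions (sum w Q). h (butlast d) * u (last d) * P_coeff Q R w d) =
    (\<Sum>E\<in>order_ideals Q R - {Q}.
        u (sum w (Q - E)) * (\<Sum>g\<in>compositions (sum w E). h g * P_coeff E R w g))"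
proof -
  define a where "a = sum w Q"
  define H where "H E c = (\<Sum>g\<in>compositions (a - c). h g * P_coeff E R w g)" for E c
  have a: "a > 0" unfolding a_def using sum_pos[OF Q ne] w by blast
  have "(\<Sum>d\<in>compositions a. h (butlast d) * u (last d) * P_coeff Q R w d) =
      (\<Sum>c\<in>{1..a}. \<Sum>g\<in>compositions (a - c). h g * u c * P_coeff Q R w (g @ [c]))"
    using sum_compositions_snoc[OF a, of "\<lambda>d. h (butlast d) * u (last d) * P_coeff Q R w d"] by simp
  also have "\<dots> = (\<Sum>c\<in>{1..a}. \<Sum>g\<in>compositions (a - c). \<Sum>E\<in>order_ideals Q R.
      if sum w (Q - E) = c then u c * (h g * P_coeff E R w g) else 0)"
    by (simp add: P_coeff_snoc[OF Q w] sum_distrib_left if_distrib mult_ac cong: if_cong)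
  also have "\<dots> = (\<Sum>c\<in>{1..a}. \<Sum>E\<in>order_ideals Q R. \<Sum>g\<in>compositions (a - c).
      if sum w (Q - E) = c then u c * (h g * P_coeff E R w g) else 0)"
    by (intro sum.cong refl sum.swap)
  also have "\<dots> = (\<Sum>c\<in>{1..a}. \<Sum>E\<in>order_ideals Q R. if sum w (Q - E) = c then u c * H E c else 0)"
    unfolding H_def sum_distrib_left by (intro sum.cong refl) auto
  also have "\<dots> = (\<Sum>E\<in>order_ideals Q R.
      if sum w (Q - E) \<in> {1..a} then u (sum w (Q - E)) * H E (sum w (Q - E)) else 0)"
    by (subst sum.swap) simp
  also have "\<dots> = (\<Sum>E\<in>order_ideals Q R.
      if E = Q then 0 else u (sum w (Q - E)) * H E (sum w (Q - E)))"
    using order_ideal_complement_weight[OF Q w] by (intro sum.cong) (auto simp: a_def)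
  also have "\<dots> = (\<Sum>E\<in>order_ideals Q R - {Q}. u (sum w (Q - E)) * H E (sum w (Q - E)))"
    by (simp add: sum.If_cases finite_order_ideals[OF Q] Diff_eq Collect_neg_eq)
  also have "\<dots> = (\<Sum>E\<in>order_ideals Q R - {Q}.
        u (sum w (Q - E)) * (\<Sum>g\<in>compositions (sum w E). h g * P_coeff E R w g))"
    using order_ideal_complement_weight(2)[OF Q w] by (intro sum.cong) (auto simp: H_def a_def)
  finally show ?thesis unfolding a_def .
qed

definition signed_P_coeff :: "'a set \<Rightarrow> 'a rel \<Rightarrow> ('a \<Rightarrow> nat) \<Rightarrow> real" where
  "signed_P_coeff E R w = (\<Sum>g\<in>compositions (sum w E). (-1) ^ length g * P_coeff E R w g)"

lemma sum_order_ideals_signed_P_coeff: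
  assumes Q: "finite Q" and w: "\<forall>x\<in>Q. w x > 0"
  shows "(\<Sum>E\<in>order_ideals Q R. signed_P_coeff E R w) = (if Q = {} then 1 else 0)"
proof (cases "Q = {}")
  case True
  then show ?thesis
    by (simp add: order_ideals_empty signed_P_coeff_def compositions_0 P_coeff_Nil)
next
  case False
  have "(-1) ^ length (butlast d) = - ((-1::real) ^ length d)" if "d \<in> compositions (sum w Q)" for d
    using compositions_Nil[OF that] sum_pos[OF Q False, of w] w by (cases d rule: rev_cases) auto
  then have "- signed_P_coeff Q R w =
      (\<Sum>d\<in>compositions (sum w Q). (-1) ^ length (butlast d) * 1 * P_coeff Q R w d)"
    by (simp add: signed_P_coeff_def sum_negf)
  also have "\<dots> = (\<Sum>E\<in>order_ideals Q R - {Q}. signed_P_coeff E R w)"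
    using sum_compositions_split_last[OF Q w False, of "\<lambda>g. (-1) ^ length g" "\<lambda>_. 1"]
    by (simp add: signed_P_coeff_def)
  finally show ?thesis
    using sum.remove[OF finite_order_ideals[OF Q] self_in_order_ideals,
        of "\<lambda>E. signed_P_coeff E R w"]
      False by simp
qed

text \<open>The weight of the minimum of D, or 0 if D has no minimum.\<close>

definition min_weight :: "'a set \<Rightarrow> 'a rel \<Rightarrow> ('a \<Rightarrow> nat) \<Rightarrow> real" where
  "min_weight D R w = (\<Sum>z\<in>{z\<in>D. \<forall>y\<in>D. y \<noteq> z \<longrightarrow> (z, y) \<in> R}. real (w z))"

lemma min_weight_nonneg: "min_weight D R w \<ge> 0"
  unfolding min_weight_def by (rule sum_nonneg) simp

lemma min_weight_empty_rel: "min_weight D {} w = (if \<exists>z. D = {z} then real (w (the_elem D)) else 0)"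
proof -
  have "{z\<in>D. \<forall>y\<in>D. y \<noteq> z \<longrightarrow> (z, y) \<in> {}} = (if \<exists>z. D = {z} then D else {})" by auto
  then show ?thesis by (auto simp: min_weight_def)
qed

lemma order_ideals_avoiding:
  assumes z: "z \<in> D" and tr: "trans R"
  shows "{E \<in> order_ideals D R. z \<notin> E} = order_ideals {y\<in>D. y \<noteq> z \<and> (z, y) \<notin> R} R"
proof (intro equalityI subsetI)
  fix E assume "E \<in> {E \<in> order_ideals D R. z \<notin> E}"
  then show "E \<in> order_ideals {y\<in>D. y \<noteq> z \<and> (z, y) \<notin> R} R"
    using z by (auto simp: order_ideals_def)
next
  fix E assume E: "E \<in> order_ideals {y\<in>D. y \<noteq> z \<and> (z, y) \<notin> R} R"
  have "x \<in> E" if "x \<in> D" "y \<in> E" "(x, y) \<in> R" "x \<noteq> y" for x y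
  proof -
    have "y \<in> D" "y \<noteq> z" "(z, y) \<notin> R" using E that(2) by (auto simp: order_ideals_def)
    then have "x \<noteq> z \<and> (z, x) \<notin> R" using that tr by (auto dest: transD)
    then show "x \<in> E" using E that by (auto simp: order_ideals_def)
  qed
  then show "E \<in> {E \<in> order_ideals D R. z \<notin> E}" using E by (auto simp: order_ideals_def)
qed

definition comp_weight :: "nat list \<Rightarrow> real" where
  "comp_weight g = (-1) ^ (length g - 1) * real (last g)"

lemma sum_compositions_comp_weight:
  assumes D: "finite D" and w: "\<forall>x\<in>D. w x > 0" and tr: "trans R" and ne: "D \<noteq> {}"
  shows "(\<Sum>d\<in>compositions (sum w D). comp_weight d * P_coeff D R w d) = min_weight D R w"
proof -
  let ?S = "\<lambda>E. signed_P_coeff E R w"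
  have "(\<Sum>d\<in>compositions (sum w D). comp_weight d * P_coeff D R w d) =
      (\<Sum>E\<in>order_ideals D R - {D}. real (sum w (D - E)) * ?S E)"
    using sum_compositions_split_last[OF D w ne, of "\<lambda>g. (-1) ^ length g" real R]
    by (simp add: comp_weight_def signed_P_coeff_def)
  also have "\<dots> = (\<Sum>E\<in>order_ideals D R. real (sum w (D - E)) * ?S E)"
    by (rule sum.mono_neutral_left) (auto simp: finite_order_ideals[OF D])
  also have "\<dots> = (\<Sum>E\<in>order_ideals D R. \<Sum>z\<in>D. if z \<notin> E then real (w z) * ?S E else 0)"
    by (intro sum.cong refl)
       (simp add: sum_distrib_right sum.If_cases[OF D] Diff_eq Collect_neg_eq Int_commute)
  also have "\<dots> = (\<Sum>z\<in>D. real (w z) * (\<Sum>E\<in>{E \<in> order_ideals D R. z \<notin> E}. ?S E))"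
    by (subst sum.swap)
       (simp add: sum.inter_filter[OF finite_order_ideals[OF D]] sum_distrib_left if_distrib
         cong: if_cong)
  txt \<open>The ideals avoiding z are the ideals of D minus the up-set of z, so by the cancellation
    lemma they contribute exactly when z is the minimum of D.\<close>
  also have "\<dots> = (\<Sum>z\<in>D. if \<forall>y\<in>D. y \<noteq> z \<longrightarrow> (z, y) \<in> R then real (w z) else 0)"
  proof (intro sum.cong refl)
    fix z assume z: "z \<in> D"
    have "(\<Sum>E\<in>{E \<in> order_ideals D R. z \<notin> E}. ?S E) =
        (if {y\<in>D. y \<noteq> z \<and> (z, y) \<notin> R} = {} then 1 else 0)"
      unfolding order_ideals_avoiding[OF z tr]
      using D w by (intro sum_order_ideals_signed_P_coeff) auto
    then show "real (w z) * (\<Sum>E\<in>{E \<in> order_ideals D R. z \<notin> E}. ?S E) =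
        (if \<forall>y\<in>D. y \<noteq> z \<longrightarrow> (z, y) \<in> R then real (w z) else 0)" by auto
  qed
  also have "\<dots> = min_weight D R w"
    by (simp add: min_weight_def sum.inter_filter[OF D])
  finally show ?thesis .
qed

subsection \<open>A functional detecting the power sum coefficients\<close>

text \<open>p_functional alpha G is phi_alpha(F) for the coefficient function
  G b = [x_1^{b_1} x_2^{b_2} ...] F.\<close>

fun p_functional :: "nat list \<Rightarrow> (nat list \<Rightarrow> real) \<Rightarrow> real" where
  "p_functional [] G = G []"
| "p_functional (a # as) G = (\<Sum>g\<in>compositions a. comp_weight g * p_functional as (\<lambda>b. G (g @ b)))"

lemma p_functional_lincomb:
  "p_functional as (\<lambda>b. \<Sum>i\<in>I. c i * H i b) = (\<Sum>i\<in>I. c i * p_functional as (H i))"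
proof (induction as arbitrary: H)
  case (Cons a as)
  then show ?case
    by (simp add: sum_distrib_left sum.swap[of _ I] mult_ac)
qed simp

fun ideal_chain_weight :: "'a set \<Rightarrow> 'a rel \<Rightarrow> ('a \<Rightarrow> nat) \<Rightarrow> nat list \<Rightarrow> real" where
  "ideal_chain_weight X R w [] = (if X = {} then 1 else 0)"
| "ideal_chain_weight X R w (a # as) = (\<Sum>D\<in>order_ideals X R.
      (if sum w D = a then min_weight D R w else 0) * ideal_chain_weight (X - D) R w as)"

lemma ideal_chain_weight_nonneg: "ideal_chain_weight X R w as \<ge> 0"
  by (induction as arbitrary: X) (simp_all add: sum_nonneg min_weight_nonneg)

lemma sum_compositions_comp_weight_P_coeff:
  assumes D: "finite D" and w: "\<forall>x\<in>D. w x > 0" and tr: "trans R" and a: "a > 0"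
  shows "(\<Sum>g\<in>compositions a. comp_weight g * P_coeff D R w g) =
    (if sum w D = a then min_weight D R w else 0)"
proof (cases "sum w D = a")
  case True
  then have "D \<noteq> {}" using a by auto
  then show ?thesis using sum_compositions_comp_weight[OF D w tr] True by simp
next
  case False
  then show ?thesis by (simp add: P_coeff_eq_0 compositions_def)
qed

lemma p_functional_P_coeff:
  assumes "finite X" "\<forall>x\<in>X. w x > 0" "trans R" "\<forall>a\<in>set as. a > 0"
  shows "p_functional as (P_coeff X R w) = ideal_chain_weight X R w as"
  using assms
proof (induction as arbitrary: X)
  case Nil
  then show ?case by (simp add: P_coeff_Nil)
next
  case (Cons a as)
  have "p_functional (a # as) (P_coeff X R w) = (\<Sum>g\<in>compositions a. comp_weight g *
      (\<Sum>D\<in>order_ideals X R. P_coeff D R w g * p_functional as (P_coeff (X - D) R w)))"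
    using Cons.prems by (simp add: P_coeff_append p_functional_lincomb)
  also have "\<dots> = (\<Sum>D\<in>order_ideals X R.
      (\<Sum>g\<in>compositions a. comp_weight g * P_coeff D R w g) * p_functional as (P_coeff (X - D) R w))"
    by (simp add: sum_distrib_left sum_distrib_right sum.swap[of _ "compositions a"] mult_ac)
  also have "\<dots> = ideal_chain_weight X R w (a # as)"
  proof (simp, intro sum.cong refl)
    fix D assume D: "D \<in> order_ideals X R"
    then have DX: "D \<subseteq> X" by (rule order_ideals_subset)
    have "p_functional as (P_coeff (X - D) R w) = ideal_chain_weight (X - D) R w as"
      using Cons by auto
    moreover have "(\<Sum>g\<in>compositions a. comp_weight g * P_coeff D R w g) =
        (if sum w D = a then min_weight D R w else 0)"
      using Cons.prems DX finite_subset
      by (intro sum_compositions_comp_weight_P_coeff) auto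
    ultimately show "(\<Sum>g\<in>compositions a. comp_weight g * P_coeff D R w g) *
        p_functional as (P_coeff (X - D) R w) =
        (if sum w D = a then min_weight D R w else 0) * ideal_chain_weight (X - D) R w as" by simp
  qed
  finally show ?case .
qed

lemma image_mset_mset_set_eq_Cons:
  assumes "finite X"
  shows "image_mset w (mset_set X) = mset (a # as) \<longleftrightarrow>
    (\<exists>z\<in>X. w z = a \<and> image_mset w (mset_set (X - {z})) = mset as)"
proof
  assume h: "image_mset w (mset_set X) = mset (a # as)"
  then have "a \<in> w ` X"
    using assms by (metis finite_set_mset_mset_set list.set_intros(1) set_image_mset set_mset_mset)
  then obtain z where z: "z \<in> X" "w z = a" by blast
  then show "\<exists>z\<in>X. w z = a \<and> image_mset w (mset_set (X - {z})) = mset as"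
    using h mset_set.remove[OF assms z(1)] by auto
qed (use mset_set.remove[OF assms] in auto)

lemma ideal_chain_weight_antichain_pos_iff:
  assumes "finite X" "\<forall>x\<in>X. w x > 0"
  shows "ideal_chain_weight X {} w as > 0 \<longleftrightarrow> image_mset w (mset_set X) = mset as"
  using assms
proof (induction as arbitrary: X)
  case Nil
  then show ?case by (auto simp: mset_set_empty_iff)
next
  case (Cons a as)
  let ?t = "\<lambda>D. (if sum w D = a then min_weight D {} w else 0) * ideal_chain_weight (X - D) {} w as"
  have nonneg: "?t D \<ge> 0" for D by (simp add: min_weight_nonneg ideal_chain_weight_nonneg)
  have "ideal_chain_weight X {} w (a # as) > 0 \<longleftrightarrow> (\<exists>D\<in>Pow X. ?t D > 0)"
    using Cons.prems(1) nonneg sum_nonneg_eq_0_iff[of "Pow X" ?t] sum_nonneg[of "Pow X" ?t]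
    by (force simp: order_ideals_empty_rel less_le)
  also have "\<dots> \<longleftrightarrow> (\<exists>z\<in>X. w z = a \<and> image_mset w (mset_set (X - {z})) = mset as)"
  proof
    assume "\<exists>D\<in>Pow X. ?t D > 0"
    then obtain D where D: "D \<subseteq> X" and pos: "?t D > 0" by auto
    then have "sum w D = a" "min_weight D {} w > 0" "ideal_chain_weight (X - D) {} w as > 0"
      using min_weight_nonneg[of D "{}" w] ideal_chain_weight_nonneg[of "X - D" "{}" w as]
      by (auto split: if_splits simp: zero_less_mult_iff)
    moreover from this obtain z where "D = {z}" using min_weight_empty_rel[of D w]
      by (auto split: if_splits)
    ultimately show "\<exists>z\<in>X. w z = a \<and> image_mset w (mset_set (X - {z})) = mset as"
      using Cons D by auto
  next
    assume "\<exists>z\<in>X. w z = a \<and> image_mset w (mset_set (X - {z})) = mset as"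
    then obtain z where z: "z \<in> X" "w z = a" "image_mset w (mset_set (X - {z})) = mset as" by blast
    moreover have "ideal_chain_weight (X - {z}) {} w as > 0" using Cons z by auto
    moreover have "a > 0" using Cons.prems z by auto
    ultimately have "?t {z} > 0"
      using Cons.prems min_weight_empty_rel[of "{z}" w] by simp
    then show "\<exists>D\<in>Pow X. ?t D > 0" using z(1) by blast
  qed
  also have "\<dots> \<longleftrightarrow> image_mset w (mset_set X) = mset (a # as)"
    by (rule image_mset_mset_set_eq_Cons[OF Cons.prems(1), symmetric])
  finally show ?case .
qed

subsection \<open>Power sums as generating functions of antichains\<close>

lemma finite_submultisets: "finite {N. N \<subseteq># M}"
proof (rule finite_subset)
  show "{N. N \<subseteq># M} \<subseteq> (\<Union>n\<in>{..size M}. multisets_of_size (set_mset M) n)"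
    by (auto simp: multisets_of_size_def dest: set_mset_mono size_mset_mono)
qed auto

lemma series_mult_power_sum:
  assumes k: "k > 0"
  shows "series_mult (power_sum k) G m =
    (\<Sum>i\<in>{i. 0 < i \<and> replicate_mset k i \<subseteq># m}. G (m - replicate_mset k i))"
proof -
  let ?I = "{i. 0 < i \<and> replicate_mset k i \<subseteq># m}"
  have "series_mult (power_sum k) G m =
      (\<Sum>m1\<in>{m1. m1 \<subseteq># m}. if \<exists>i>0. m1 = replicate_mset k i then G (m - m1) else 0)"
    unfolding series_mult_def
    by (intro sum.cong refl)
       (simp only: power_sum_def if_distrib[of "\<lambda>c. c * _"] mult_1 mult_zero_left)
  also have "\<dots> = (\<Sum>m1\<in>{m1 \<in> {m1. m1 \<subseteq># m}. \<exists>i>0. m1 = replicate_mset k i}. G (m - m1))"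
    by (rule sum.inter_filter[OF finite_submultisets, symmetric])
  also have "{m1 \<in> {m1. m1 \<subseteq># m}. \<exists>i>0. m1 = replicate_mset k i} = replicate_mset k ` ?I"
    by auto
  also have "(\<Sum>m1\<in>replicate_mset k ` ?I. G (m - m1)) = (\<Sum>i\<in>?I. G (m - replicate_mset k i))"
    using k by (intro sum.reindex_cong[OF _ refl refl]) (auto simp: inj_on_def replicate_mset_eq_iff)
  finally show ?thesis .
qed

lemma num_P_partitions_antichain_Cons:
  assumes ks: "\<forall>j<length ks. ks ! j > 0" and k: "k > 0"
  defines "n \<equiv> length ks"
  shows "num_P_partitions {..<Suc n} {} (nth (k # ks)) m =
    (\<Sum>i\<in>{i. replicate_mset k i \<subseteq># m}. num_P_partitions {..<n} {} (nth ks) (m - replicate_mset k i))"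
proof -
  define I where "I = {i. replicate_mset k i \<subseteq># m}"
  define T where "T = Sigma I (\<lambda>i. P_partitions {..<n} {} (nth ks) (m - replicate_mset k i))"
  have finI: "finite I"
    using k by (intro finite_subset[of I "set_mset m"]) (auto simp: I_def dest: mset_subset_eqD)
  have "bij_betw (\<lambda>f. (f 0, \<lambda>j\<in>{..<n}. f (Suc j))) (P_partitions {..<Suc n} {} (nth (k # ks)) m) T"
  proof (rule bij_betwI[where g="\<lambda>(i, g) j. if j = 0 then i else g (j - 1)"])
    show "(\<lambda>f. (f 0, \<lambda>j\<in>{..<n}. f (Suc j))) \<in> P_partitions {..<Suc n} {} (nth (k # ks)) m \<rightarrow> T"
    proof
      fix f assume "f \<in> P_partitions {..<Suc n} {} (nth (k # ks)) m"
      then have "m = replicate_mset k (f 0) + weighted_image {..<n} (nth ks) (\<lambda>j. f (Suc j))"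
        by (simp add: P_partitions_def weighted_image_lessThan_Suc)
      then show "(f 0, \<lambda>j\<in>{..<n}. f (Suc j)) \<in> T"
        unfolding T_def I_def P_partitions_def by (simp add: order_preserving_def)
    qed
    show "(\<lambda>(i, g) j. if j = 0 then i else g (j - 1)) \<in>
        T \<rightarrow> P_partitions {..<Suc n} {} (nth (k # ks)) m"
    proof
      fix p assume "p \<in> T"
      then obtain i g where "p = (i, g)" "replicate_mset k i \<subseteq># m"
        and g: "g \<in> P_partitions {..<n} {} (nth ks) (m - replicate_mset k i)"
        unfolding T_def I_def by auto
      then show "(\<lambda>(i, g) j. if j = 0 then i else g (j - 1)) p \<in>
          P_partitions {..<Suc n} {} (nth (k # ks)) m"
        using P_partitions_extensional[OF g]
        by (auto simp: P_partitions_def weighted_image_lessThan_Suc order_preserving_def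
            PiE_def extensional_def)
    qed
    show "(\<lambda>(i, g) j. if j = 0 then i else g (j - 1)) (f 0, \<lambda>j\<in>{..<n}. f (Suc j)) = f"
      if "f \<in> P_partitions {..<Suc n} {} (nth (k # ks)) m" for f
      using P_partitions_extensional[OF that] by (auto simp: fun_eq_iff gr0_conv_Suc)
    show "(\<lambda>f. (f 0, \<lambda>j\<in>{..<n}. f (Suc j))) ((\<lambda>(i, g) j. if j = 0 then i else g (j - 1)) p) = p"
      if "p \<in> T" for p
      using that P_partitions_extensional by (fastforce simp: T_def)
  qed
  then have "num_P_partitions {..<Suc n} {} (nth (k # ks)) m = card T"
    unfolding num_P_partitions_def by (rule bij_betw_same_card)
  also have "\<dots> = (\<Sum>i\<in>I. num_P_partitions {..<n} {} (nth ks) (m - replicate_mset k i))"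
    unfolding T_def num_P_partitions_def using ks
    by (intro card_SigmaI finI ballI finite_P_partitions) (auto simp: n_def)
  finally show ?thesis unfolding I_def .
qed

lemma power_sum_list_eq_num_P_partitions:
  assumes "0 \<notin> set ks" "0 \<notin># m"
  shows "power_sum_list ks m = real (num_P_partitions {..<length ks} {} (nth ks) m)"
  using assms
proof (induction ks arbitrary: m)
  case Nil
  then show ?case
    using num_P_partitions_size_neq[of m "nth []" "{..<0}"]
    by (cases "m = {#}") (simp_all add: series_one_def num_P_partitions_empty)
next
  case (Cons k ks)
  have k: "k > 0" and ks: "\<forall>j<length ks. ks ! j > 0" using Cons.prems
    by (auto simp: in_set_conv_nth)
  have "0 < i" if "replicate_mset k i \<subseteq># m" for i
    using mset_subset_eqD[OF that, of i] k Cons.prems(2) by (auto intro: Nat.gr0I)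
  then have I: "{i. 0 < i \<and> replicate_mset k i \<subseteq># m} = {i. replicate_mset k i \<subseteq># m}"
    by blast
  have "0 \<notin># m - N" for N using Cons.prems(2) in_diffD by metis
  then show ?case
    using Cons.IH Cons.prems(1)
    by (simp add: series_mult_power_sum[OF k] num_P_partitions_antichain_Cons[OF ks k] I)
qed

subsection \<open>Symmetric series are determined by their values at canonical monomials\<close>

definition monomial_type :: "nat multiset \<Rightarrow> nat multiset" where
  "monomial_type m = image_mset (count m) (mset_set (set_mset m))"

definition canonical_monomial :: "nat multiset \<Rightarrow> nat multiset" where
  "canonical_monomial lam = comp_monomial 0 (sorted_list_of_multiset lam)"

lemma canonical_monomial_pos: "set_mset (canonical_monomial lam) \<subseteq> {0<..}"
proof
  fix v assume "v \<in># canonical_monomial lam"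
  then show "v \<in> {0<..}" unfolding canonical_monomial_def by (auto dest: comp_monomial_bounds)
qed

lemma bij_betw_extend:
  assumes g: "bij_betw g A B" and A: "finite A" "A \<subseteq> U" and B: "B \<subseteq> U"
  shows "\<exists>s. bij_betw s U U \<and> (\<forall>x\<in>A. s x = g x)"
proof -
  have fB: "finite B" using bij_betw_finite[OF g] A(1) by simp
  have "card (B - A) = card (A - B)"
    using bij_betw_same_card[OF g] A(1) fB
    by (simp add: card_Diff_subset_Int Int_commute)
  then obtain k where k: "bij_betw k (B - A) (A - B)"
    using finite_same_card_bij[of "B - A" "A - B"] A(1) fB by auto
  define s where "s x = (if x \<in> A then g x else if x \<in> B then k x else x)" for x
  have "bij_betw s A B" using g by (rule bij_betw_cong[THEN iffD1, rotated]) (simp add: s_def)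
  moreover have "bij_betw s (B - A) (A - B)"
    using k by (rule bij_betw_cong[THEN iffD1, rotated]) (simp add: s_def)
  moreover have "bij_betw s (U - (A \<union> B)) (U - (A \<union> B))"
    using bij_betw_id by (rule bij_betw_cong[THEN iffD1, rotated]) (simp add: s_def)
  ultimately have "bij_betw s ((A \<union> (B - A)) \<union> (U - (A \<union> B))) ((B \<union> (A - B)) \<union> (U - (A \<union> B)))"
    by (intro bij_betw_combine) auto
  moreover have "(A \<union> (B - A)) \<union> (U - (A \<union> B)) = U" "(B \<union> (A - B)) \<union> (U - (A \<union> B)) = U"
    using A B by auto
  ultimately show ?thesis by (auto simp: s_def)
qed

lemma sum_replicate_count: "(\<Sum>v\<in>set_mset m. replicate_mset (count m v) v) = m"
  by (rule multiset_eqI) (simp add: count_sum flip: count_eq_zero_iff)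

text \<open>Listing the variables of m by increasing exponent identifies m with the canonical monomial
  of its type, up to a permutation of the variables.\<close>

lemma canonical_monomial_relabel:
  assumes pos: "set_mset m \<subseteq> {0<..}"
  shows "\<exists>s. bij_betw s {0<..} {0<..} \<and> image_mset s (canonical_monomial (monomial_type m)) = m"
proof -
  define zs where "zs = sort_key (count m) (sorted_list_of_set (set_mset m))"
  define n where "n = length zs"
  have zs: "distinct zs" "set zs = set_mset m" by (simp_all add: zs_def)
  have "mset zs = mset_set (set_mset m)" using mset_set_set[OF zs(1)] zs(2) by simp
  then have "monomial_type m = mset (map (count m) zs)" by (simp add: monomial_type_def)
  moreover have "sorted (map (count m) zs)" by (simp add: zs_def)
  ultimately have xs: "sorted_list_of_multiset (monomial_type m) = map (count m) zs"
    using sorted_list_of_multiset_mset[of "map (count m) zs"] by (simp add: sorted_sort_id)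
  have nth_zs: "bij_betw (nth zs) {..<n} (set_mset m)"
    using bij_betw_nth[OF zs(1) _ zs(2)[symmetric]] by (simp add: n_def)
  have "bij_betw (\<lambda>v. v - 1) {0<..n} {..<n}" by (rule bij_betwI[where g=Suc]) auto
  from bij_betw_trans[OF this nth_zs]
  have "bij_betw (\<lambda>v. zs ! (v - 1)) {0<..n} (set_mset m)" by (simp add: comp_def)
  moreover have "{0<..n} \<subseteq> {0::nat<..}" by auto
  ultimately obtain s where s: "bij_betw s {0<..} {0<..}" and s_eq: "\<forall>v\<in>{0<..n}. s v = zs ! (v - 1)"
    using bij_betw_extend[OF _ finite_greaterThanAtMost _ pos] by blast
  have "image_mset s (canonical_monomial (monomial_type m)) =
      weighted_image {..<n} (nth (map (count m) zs)) (s \<circ> Suc)"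
    by (simp add: canonical_monomial_def xs comp_monomial_eq_weighted_image image_mset_weighted_image
        n_def comp_def)
  also have "\<dots> = (\<Sum>i<n. replicate_mset (count m (zs ! i)) (zs ! i))"
    unfolding weighted_image_def using s_eq by (intro sum.cong) (auto simp: n_def)
  also have "\<dots> = (\<Sum>v\<in>set_mset m. replicate_mset (count m v) v)"
    by (rule sum.reindex_bij_betw[OF nth_zs])
  finally have "image_mset s (canonical_monomial (monomial_type m)) = m"
    unfolding sum_replicate_count .
  with s show ?thesis by blast
qed

lemma symmetric_series_canonical:
  assumes "symmetric_series F" "set_mset m \<subseteq> {0<..}"
  shows "F m = F (canonical_monomial (monomial_type m))"
proof -
  obtain s where s: "bij_betw s {0<..} {0<..}"
    "image_mset s (canonical_monomial (monomial_type m)) = m"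
    using canonical_monomial_relabel[OF assms(2)] by blast
  from assms(1)[unfolded symmetric_series_def, rule_format,
      OF s(1) canonical_monomial_pos[of "monomial_type m"]]
  show ?thesis unfolding s(2) .
qed

lemma length_sorted_list_of_multiset [simp]: "length (sorted_list_of_multiset M) = size M"
  by (metis mset_sorted_list_of_multiset size_mset)

lemma image_mset_nth_mset_set: "image_mset (nth xs) (mset_set {..<length xs}) = mset xs"
proof -
  have "mset xs = mset (map (nth xs) [0..<length xs])" by (simp add: map_nth)
  then show ?thesis by (simp add: atLeast0LessThan)
qed

lemma partition_parts_pos:
  assumes "is_partition lam"
  shows "\<forall>i\<in>{..<size lam}. sorted_list_of_multiset lam ! i > 0"
proof
  fix i assume "i \<in> {..<size lam}"
  then have "sorted_list_of_multiset lam ! i \<in># lam"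
    using nth_mem[of i "sorted_list_of_multiset lam"] by simp
  then show "sorted_list_of_multiset lam ! i > 0"
    using assms by (auto simp: is_partition_def intro!: Nat.gr0I)
qed

lemma power_sum_part_eq_num_P_partitions:
  assumes "is_partition lam" "0 \<notin># m"
  shows "power_sum_part lam m =
    real (num_P_partitions {..<size lam} {} (nth (sorted_list_of_multiset lam)) m)"
  using power_sum_list_eq_num_P_partitions[of "sorted_list_of_multiset lam" m] assms
  by (simp add: power_sum_part_def is_partition_def)

lemma power_sum_list_nonzero: "power_sum_list ks m \<noteq> 0 \<Longrightarrow> 0 \<notin># m"
proof (induction ks arbitrary: m)
  case Nil
  then show ?case by (simp add: series_one_def split: if_splits)
next
  case (Cons k ks)
  then obtain m1 where m1: "m1 \<subseteq># m" "power_sum k m1 \<noteq> 0" "power_sum_list ks (m - m1) \<noteq> 0"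
    by (auto simp: series_mult_def elim: sum.not_neutral_contains_not_neutral)
  then obtain i where "i > 0" "m1 = replicate_mset k i"
    by (auto simp: power_sum_def split: if_splits)
  moreover have "m = m1 + (m - m1)" using m1(1) by simp
  ultimately show ?case using Cons.IH[OF m1(3)] by (metis in_replicate_mset less_not_refl union_iff)
qed

lemma card_set_mset_weighted_image_le:
  assumes "finite X" "\<forall>x\<in>X. w x > 0"
  shows "card (set_mset (weighted_image X w f)) \<le> card X"
  unfolding set_mset_weighted_image[OF assms] using assms(1) by (rule card_image_le)

lemma monomial_type_weighted_image:
  assumes X: "finite X" and w: "\<forall>x\<in>X. w x > 0" and inj: "inj_on f X"
  shows "monomial_type (weighted_image X w f) = image_mset w (mset_set X)"
proof -
  have count: "count (weighted_image X w f) (f x) = w x" if "x \<in> X" for x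
  proof -
    have "count (weighted_image X w f) (f x) = (\<Sum>y\<in>X. if y = x then w y else 0)"
      unfolding count_weighted_image using inj that by (intro sum.cong) (auto dest: inj_onD)
    then show ?thesis using X that by simp
  qed
  have "monomial_type (weighted_image X w f) = image_mset (count (weighted_image X w f))
      (image_mset f (mset_set X))"
    unfolding monomial_type_def set_mset_weighted_image[OF X w] image_mset_mset_set[OF inj] ..
  also have "\<dots> = image_mset w (mset_set X)"
    using count X by (auto simp: multiset.map_comp comp_def intro!: image_mset_cong)
  finally show ?thesis .
qed

lemma power_sum_part_nonzero:
  assumes lam: "is_partition lam" and nz: "power_sum_part lam m \<noteq> 0"
  shows "0 \<notin># m" "size m = sum_mset lam" "card (set_mset m) \<le> size lam"
    "card (set_mset m) = size lam \<Longrightarrow> monomial_type m = lam"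
proof -
  let ?xs = "sorted_list_of_multiset lam"
  show z: "0 \<notin># m" using nz power_sum_list_nonzero by (simp add: power_sum_part_def)
  have "num_P_partitions {..<size lam} {} (nth ?xs) m \<noteq> 0"
    using nz power_sum_part_eq_num_P_partitions[OF lam z] by simp
  then obtain f where "f \<in> P_partitions {..<size lam} {} (nth ?xs) m"
    unfolding num_P_partitions_def by (metis card.empty ex_in_conv)
  then have m: "m = weighted_image {..<size lam} (nth ?xs) f" by (simp add: P_partitions_def)
  note pos = partition_parts_pos[OF lam]
  have "sum (nth ?xs) {..<size lam} = sum_list ?xs" by (simp add: sum_list_sum_nth atLeast0LessThan)
  then show "size m = sum_mset lam" unfolding m size_weighted_image
    by (metis mset_sorted_list_of_multiset sum_mset_sum_list)
  show card: "card (set_mset m) \<le> size lam"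
    unfolding m using card_set_mset_weighted_image_le[OF _ pos] by simp
  assume "card (set_mset m) = size lam"
  then have "inj_on f {..<size lam}"
    unfolding m set_mset_weighted_image[OF finite_lessThan pos] by (simp add: eq_card_imp_inj_on)
  then show "monomial_type m = lam"
    using monomial_type_weighted_image[OF finite_lessThan pos] image_mset_nth_mset_set[of ?xs]
    by (simp add: m)
qed

lemma power_sum_part_canonical_pos:
  assumes lam: "is_partition lam"
  shows "power_sum_part lam (canonical_monomial lam) > 0"
proof -
  let ?xs = "sorted_list_of_multiset lam"
  have "0 \<notin># canonical_monomial lam" using canonical_monomial_pos by blast
  moreover have "restrict Suc {..<size lam} \<in> P_partitions {..<size lam} {} (nth ?xs)
      (canonical_monomial lam)"
    by (simp add: P_partitions_def order_preserving_def canonical_monomial_def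
      comp_monomial_eq_weighted_image)
  then have "num_P_partitions {..<size lam} {} (nth ?xs) (canonical_monomial lam) > 0"
    unfolding num_P_partitions_def using finite_P_partitions[OF _ partition_parts_pos[OF lam]]
    by (metis card_gt_0_iff empty_iff finite_lessThan)
  ultimately show ?thesis using power_sum_part_eq_num_P_partitions[OF lam] by simp
qed

lemma canonical_monomial_type:
  assumes lam: "is_partition lam"
  shows "card (set_mset (canonical_monomial lam)) = size lam"
    "monomial_type (canonical_monomial lam) = lam"
proof -
  let ?xs = "sorted_list_of_multiset lam"
  have c: "canonical_monomial lam = weighted_image {..<size lam} (nth ?xs) Suc"
    by (simp add: canonical_monomial_def comp_monomial_eq_weighted_image)
  show "card (set_mset (canonical_monomial lam)) = size lam"
    unfolding c set_mset_weighted_image[OF finite_lessThan partition_parts_pos[OF lam]]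
    by (simp add: card_image)
  have "inj_on Suc {..<size lam}" by simp
  then show "monomial_type (canonical_monomial lam) = lam"
    using monomial_type_weighted_image[OF finite_lessThan partition_parts_pos[OF lam]]
      image_mset_nth_mset_set[of ?xs] by (simp add: c)
qed

lemma power_sum_part_canonical_other:
  assumes lam: "is_partition lam" and lam0: "is_partition lam0"
    and size: "size lam = size lam0" and ne: "lam \<noteq> lam0"
  shows "power_sum_part lam (canonical_monomial lam0) = 0"
  using power_sum_part_nonzero(4)[OF lam, of "canonical_monomial lam0"]
    canonical_monomial_type[OF lam0] size ne
  by auto

lemma symmetric_power_sum_part:
  assumes lam: "is_partition lam"
  shows "symmetric_series (power_sum_part lam)"
  unfolding symmetric_series_def
proof (intro allI impI)
  fix s :: "nat \<Rightarrow> nat" and m :: "nat multiset"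
  assume s: "bij_betw s {0<..} {0<..}" and m: "set_mset m \<subseteq> {0<..}"
  have "inj_on s (set_mset m)" using s m by (meson bij_betw_imp_inj_on inj_on_subset)
  moreover have "0 \<notin># m" "0 \<notin># image_mset s m" using s m by (auto simp: bij_betw_def)
  ultimately show "power_sum_part lam (image_mset s m) = power_sum_part lam m"
    using num_P_partitions_antichain_image_mset[OF _ partition_parts_pos[OF lam]]
    by (simp add: power_sum_part_eq_num_P_partitions[OF lam])
qed

subsection \<open>Symmetric series of bounded degree lie in the span of the power sums\<close>

definition in_power_sum_span :: "series \<Rightarrow> bool" where
  "in_power_sum_span F \<longleftrightarrow> (\<exists>S c. finite S \<and> (\<forall>lam\<in>S. is_partition lam) \<and>
      F = (\<lambda>m. \<Sum>lam\<in>S. c lam * power_sum_part lam m))"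

definition bounded_support :: "nat \<Rightarrow> nat \<Rightarrow> series \<Rightarrow> bool" where
  "bounded_support M B F \<longleftrightarrow> (\<forall>m. F m \<noteq> 0 \<longrightarrow> 0 \<notin># m \<and> size m \<le> M \<and> card (set_mset m) \<le> B)"

lemma in_power_sum_span_add:
  assumes "in_power_sum_span F" "in_power_sum_span G"
  shows "in_power_sum_span (\<lambda>m. F m + G m)"
proof -
  obtain S c T d where S: "finite S" "\<forall>lam\<in>S. is_partition lam"
      "F = (\<lambda>m. \<Sum>lam\<in>S. c lam * power_sum_part lam m)"
    and T: "finite T" "\<forall>lam\<in>T. is_partition lam" "G = (\<lambda>m. \<Sum>lam\<in>T. d lam * power_sum_part lam m)"
    using assms unfolding in_power_sum_span_def by blast
  define e where "e lam = (if lam \<in> S then c lam else 0) + (if lam \<in> T then d lam else 0)" for lam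
  have "F m + G m = (\<Sum>lam\<in>S \<union> T. e lam * power_sum_part lam m)" for m
  proof -
    have "(\<Sum>lam\<in>S \<union> T. e lam * power_sum_part lam m) =
        (\<Sum>lam\<in>S \<union> T. if lam \<in> S then c lam * power_sum_part lam m else 0) +
        (\<Sum>lam\<in>S \<union> T. if lam \<in> T then d lam * power_sum_part lam m else 0)"
      unfolding e_def sum.distrib[symmetric] by (rule sum.cong) (simp_all add: distrib_right)
    also have "\<dots> = (\<Sum>lam\<in>(S \<union> T) \<inter> S. c lam * power_sum_part lam m) +
        (\<Sum>lam\<in>(S \<union> T) \<inter> T. d lam * power_sum_part lam m)"
      by (simp only: sum.inter_restrict[OF finite_UnI[OF S(1) T(1)]])
    also have "(S \<union> T) \<inter> S = S" by auto
    also have "(S \<union> T) \<inter> T = T" by auto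
    finally show ?thesis using S(3) T(3) by simp
  qed
  then show ?thesis unfolding in_power_sum_span_def using S T
    by (intro exI[of _ "S \<union> T"] exI[of _ e]) auto
qed

lemma in_power_sum_span_symmetric:
  assumes "in_power_sum_span G"
  shows "symmetric_series G"
proof -
  obtain S c where S: "\<forall>lam\<in>S. is_partition lam"
    and G: "G = (\<lambda>m. \<Sum>lam\<in>S. c lam * power_sum_part lam m)"
    using assms unfolding in_power_sum_span_def by blast
  show ?thesis
    using symmetric_power_sum_part S unfolding G symmetric_series_def by (auto intro!: sum.cong)
qed

lemma monomial_type_partition:
  "is_partition (monomial_type m)" "size (monomial_type m) = card (set_mset m)"
  "sum_mset (monomial_type m) = size m"
proof -
  show "is_partition (monomial_type m)"
    by (auto simp: monomial_type_def is_partition_def count_eq_zero_iff)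
  show "size (monomial_type m) = card (set_mset m)" by (simp add: monomial_type_def)
  show "sum_mset (monomial_type m) = size m"
    by (simp add: monomial_type_def size_multiset_overloaded_eq flip: sum_unfold_sum_mset)
qed

lemma finite_partitions_bounded: "finite {lam. is_partition lam \<and> size lam = n \<and> sum_mset lam \<le> M}"
proof (rule finite_subset)
  show "{lam. is_partition lam \<and> size lam = n \<and> sum_mset lam \<le> M} \<subseteq> multisets_of_size {..M} n"
    by (auto simp: multisets_of_size_def dest: multi_member_split)
qed auto

text \<open>One step of the triangular elimination: subtracting the combination of the p_lam with
  Suc B parts that agrees with F at their canonical monomials leaves a series supported on
  monomials with at most B distinct variables.\<close>

lemma symmetric_series_reduce:
  assumes symF: "symmetric_series F" and supp: "bounded_support M (Suc B) F"
  obtains G where "in_power_sum_span G" "symmetric_series (\<lambda>m. F m - G m)"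
    "bounded_support M B (\<lambda>m. F m - G m)"
proof
  define T where "T = {lam. is_partition lam \<and> size lam = Suc B \<and> sum_mset lam \<le> M}"
  define c where
    "c lam = F (canonical_monomial lam) / power_sum_part lam (canonical_monomial lam)" for lam
  define G where "G m = (\<Sum>lam\<in>T. c lam * power_sum_part lam m)" for m
  have finT: "finite T" unfolding T_def by (rule finite_partitions_bounded)
  show span: "in_power_sum_span G"
    unfolding in_power_sum_span_def G_def T_def using finT[unfolded T_def] by blast
  show sym: "symmetric_series (\<lambda>m. F m - G m)"
    using symF in_power_sum_span_symmetric[OF span] by (simp add: symmetric_series_def)
  have G_canonical: "G (canonical_monomial lam0) = F (canonical_monomial lam0)"
    if lam0: "lam0 \<in> T" for lam0
  proof -
    have "G (canonical_monomial lam0) = c lam0 * power_sum_part lam0 (canonical_monomial lam0)"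
      using power_sum_part_canonical_other lam0
      unfolding G_def sum.remove[OF finT lam0] by (auto simp: T_def intro!: sum.neutral)
    then show ?thesis using power_sum_part_canonical_pos[of lam0] lam0 by (simp add: c_def T_def)
  qed
  have G_nz: "0 \<notin># m \<and> size m \<le> M \<and> card (set_mset m) \<le> Suc B" if "G m \<noteq> 0" for m
  proof -
    obtain lam where "lam \<in> T" "power_sum_part lam m \<noteq> 0"
      using \<open>G m \<noteq> 0\<close> unfolding G_def by (auto elim: sum.not_neutral_contains_not_neutral)
    then show ?thesis using power_sum_part_nonzero[of lam m] by (auto simp: T_def)
  qed
  show "bounded_support M B (\<lambda>m. F m - G m)"
    unfolding bounded_support_def
  proof (intro allI impI)
    fix m assume nz: "F m - G m \<noteq> 0"
    then have "F m \<noteq> 0 \<or> G m \<noteq> 0" by auto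
    then have m: "0 \<notin># m" "size m \<le> M" "card (set_mset m) \<le> Suc B"
      using supp G_nz unfolding bounded_support_def by blast+
    moreover have "card (set_mset m) \<noteq> Suc B"
    proof
      assume card: "card (set_mset m) = Suc B"
      then have "monomial_type m \<in> T" using monomial_type_partition[of m] m by (simp add: T_def)
      moreover have "set_mset m \<subseteq> {0<..}" using m(1) by (auto intro: Nat.gr0I)
      ultimately have "F m - G m = 0"
        using symmetric_series_canonical[OF sym] G_canonical by simp
      then show False using nz by simp
    qed
    ultimately show "0 \<notin># m \<and> size m \<le> M \<and> card (set_mset m) \<le> B" by simp
  qed
qed

lemma symmetric_series_in_power_sum_span:
  assumes "symmetric_series F" "bounded_support M B F"
  shows "in_power_sum_span F"
  using assms
proof (induction B arbitrary: F)
  case 0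
  have "F m = 0" if "m \<noteq> {#}" for m
  proof (rule ccontr)
    assume "F m \<noteq> 0"
    then have "card (set_mset m) = 0" using 0(2) by (auto simp: bounded_support_def)
    then show False using that by simp
  qed
  then have "F = (\<lambda>m. \<Sum>lam\<in>{{#}}. F {#} * power_sum_part lam m)"
    by (intro ext) (simp add: power_sum_part_def series_one_def)
  then show ?case unfolding in_power_sum_span_def
    by (intro exI[of _ "{{#}}"] exI[of _ "\<lambda>_. F {#}"]) (simp add: is_partition_def)
next
  case (Suc B)
  obtain G where G: "in_power_sum_span G" "symmetric_series (\<lambda>m. F m - G m)"
    "bounded_support M B (\<lambda>m. F m - G m)"
    using symmetric_series_reduce[OF Suc.prems] .
  have "in_power_sum_span (\<lambda>m. (F m - G m) + G m)"
    using in_power_sum_span_add[OF Suc.IH[OF G(2,3)] G(1)] .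
  then show ?case by simp
qed

subsection \<open>Nonnegativity of the power sum coefficients\<close>

lemma K_poset_eq_P_coeff:
  assumes A: "finite A"
  shows "K_poset A R (comp_monomial 0 b) = P_coeff A R (\<lambda>_. 1) b"
proof -
  have "{f \<in> A \<rightarrow>\<^sub>E {0<..}. (\<forall>x\<in>A. \<forall>y\<in>A. (x, y) \<in> R \<and> x \<noteq> y \<longrightarrow> f x \<le> f y)
       \<and> image_mset f (mset_set A) = comp_monomial 0 b}
         = P_partitions A R (\<lambda>_. 1) (comp_monomial 0 b)"
  proof (intro equalityI subsetI)
    fix f assume "f \<in> {f \<in> A \<rightarrow>\<^sub>E {0<..}. (\<forall>x\<in>A. \<forall>y\<in>A. (x, y) \<in> R \<and> x \<noteq> y \<longrightarrow> f x \<le> f y)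
       \<and> image_mset f (mset_set A) = comp_monomial 0 b}"
    then show "f \<in> P_partitions A R (\<lambda>_. 1) (comp_monomial 0 b)"
      by (auto simp: P_partitions_def order_preserving_def PiE_def Pi_def
          weighted_image_one[unfolded One_nat_def])
  next
    fix f assume f: "f \<in> P_partitions A R (\<lambda>_. 1) (comp_monomial 0 b)"
    have "f x > 0" if "x \<in> A" for x
      using P_partitions_value[OF f A _ that] comp_monomial_bounds by blast
    then show "f \<in> {f \<in> A \<rightarrow>\<^sub>E {0<..}. (\<forall>x\<in>A. \<forall>y\<in>A. (x, y) \<in> R \<and> x \<noteq> y \<longrightarrow> f x \<le> f y)
       \<and> image_mset f (mset_set A) = comp_monomial 0 b}"
      using f by (auto simp: P_partitions_def order_preserving_def PiE_def Pi_def
          weighted_image_one[unfolded One_nat_def])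
  qed
  then show ?thesis unfolding K_poset_def P_coeff_def num_P_partitions_def by simp
qed

lemma K_poset_nonzero:
  assumes "finite A" "K_poset A R m \<noteq> 0"
  shows "0 \<notin># m" "size m = card A"
proof -
  have "{f \<in> A \<rightarrow>\<^sub>E {0<..}. (\<forall>x\<in>A. \<forall>y\<in>A. (x, y) \<in> R \<and> x \<noteq> y \<longrightarrow> f x \<le> f y)
       \<and> image_mset f (mset_set A) = m} \<noteq> {}"
    using assms(2) by (intro notI) (simp add: K_poset_def)
  then obtain f where f: "f \<in> A \<rightarrow>\<^sub>E {0<..}" "image_mset f (mset_set A) = m" by blast
  then show "0 \<notin># m" using assms(1) by (force simp: PiE_iff)
  show "size m = card A" using f(2) by (metis size_image_mset size_mset_set)
qed

lemma p_functional_sum_K_poset_nonneg: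
  assumes "\<forall>i\<in>I. finite (A i) \<and> trans (R i)" "\<forall>a\<in>set as. a > 0"
  shows "p_functional as (\<lambda>b. \<Sum>i\<in>I. K_poset (A i) (R i) (comp_monomial 0 b)) \<ge> 0"
proof -
  have "p_functional as (\<lambda>b. K_poset (A i) (R i) (comp_monomial 0 b)) =
      ideal_chain_weight (A i) (R i) (\<lambda>_. 1) as" if "i \<in> I" for i
    using p_functional_P_coeff[of "A i" "\<lambda>_. 1" "R i" as] assms that
    by (simp add: K_poset_eq_P_coeff)
  then show ?thesis
    using p_functional_lincomb[of as "\<lambda>_. 1" "\<lambda>i b. K_poset (A i) (R i) (comp_monomial 0 b)" I]
    by (simp add: sum_nonneg ideal_chain_weight_nonneg)
qed

lemma p_functional_power_sum_part:
  assumes lam: "is_partition lam" and mu: "is_partition mu"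
  shows "p_functional (sorted_list_of_multiset mu) (\<lambda>b. power_sum_part lam (comp_monomial 0 b)) =
    ideal_chain_weight {..<size lam} {} (nth (sorted_list_of_multiset lam))
      (sorted_list_of_multiset mu)"
proof -
  have "0 \<notin># comp_monomial 0 b" for b using comp_monomial_bounds by blast
  then have "(\<lambda>b. power_sum_part lam (comp_monomial 0 b))
      = P_coeff {..<size lam} {} (nth (sorted_list_of_multiset lam))"
    by (simp add: power_sum_part_eq_num_P_partitions[OF lam] P_coeff_def fun_eq_iff)
  moreover have "\<forall>a\<in>set (sorted_list_of_multiset mu). a > 0"
    using mu by (auto simp: is_partition_def intro: Nat.gr0I)
  moreover have "trans {}" by (simp add: trans_def)
  ultimately show ?thesis using p_functional_P_coeff[OF _ partition_parts_pos[OF lam]] by simp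
qed

text \<open>Applying the functional for mu to a combination of power sums isolates the coefficient of
  p_mu, up to a positive factor.\<close>

lemma power_sum_coeff_nonneg:
  assumes S: "finite S" "\<forall>lam\<in>S. is_partition lam"
    and F: "F = (\<lambda>m. \<Sum>lam\<in>S. c lam * power_sum_part lam m)"
    and mu: "mu \<in> S"
    and nonneg: "p_functional (sorted_list_of_multiset mu) (\<lambda>b. F (comp_monomial 0 b)) \<ge> 0"
  shows "c mu \<ge> 0"
proof -
  define Q where "Q lam = ideal_chain_weight {..<size lam} {} (nth (sorted_list_of_multiset lam))
      (sorted_list_of_multiset mu)" for lam
  have Q_pos: "Q lam > 0 \<longleftrightarrow> lam = mu" if "lam \<in> S" for lam
    using ideal_chain_weight_antichain_pos_iff[OF _ partition_parts_pos, of lam] S(2) that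
      image_mset_nth_mset_set[of "sorted_list_of_multiset lam"]
    by (auto simp: Q_def)
  have "p_functional (sorted_list_of_multiset mu) (\<lambda>b. F (comp_monomial 0 b))
      = (\<Sum>lam\<in>S. c lam * Q lam)"
    using S(2) mu by (simp add: F p_functional_lincomb p_functional_power_sum_part Q_def)
  also have "\<dots> = c mu * Q mu + (\<Sum>lam\<in>S - {mu}. c lam * Q lam)" by (rule sum.remove[OF S(1) mu])
  also have "(\<Sum>lam\<in>S - {mu}. c lam * Q lam) = 0"
  proof (rule sum.neutral, intro ballI)
    fix lam assume "lam \<in> S - {mu}"
    then have "Q lam = 0"
      using Q_pos[of lam] ideal_chain_weight_nonneg[of _ _ _ "sorted_list_of_multiset mu"]
      by (auto simp: Q_def order_less_le)
    then show "c lam * Q lam = 0" by simp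
  qed
  finally show ?thesis using nonneg Q_pos[OF mu] by (simp add: zero_le_mult_iff)
qed

lemma bounded_support_sum_K_poset:
  assumes "finite I" "\<forall>i\<in>I. finite (A i)"
  shows "bounded_support (\<Sum>i\<in>I. card (A i)) (\<Sum>i\<in>I. card (A i)) (\<lambda>m. \<Sum>i\<in>I. K_poset (A i) (R i) m)"
  unfolding bounded_support_def
proof (intro allI impI)
  fix m assume "(\<Sum>i\<in>I. K_poset (A i) (R i) m) \<noteq> 0"
  then obtain i where i: "i \<in> I" "K_poset (A i) (R i) m \<noteq> 0"
    by (rule sum.not_neutral_contains_not_neutral)
  have "card (A i) \<le> (\<Sum>i\<in>I. card (A i))" by (rule member_le_sum) (simp_all add: i(1) assms(1))
  moreover have "card (set_mset m) \<le> size m"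
    using size_mset_mono[OF mset_set_set_mset_msubset] by simp
  ultimately show "0 \<notin># m \<and> size m \<le> (\<Sum>i\<in>I. card (A i)) \<and> card (set_mset m) \<le> (\<Sum>i\<in>I. card (A i))"
    using K_poset_nonzero[OF _ i(2)] assms(2) i(1) by simp
qed

theorem corollary4p3:
  fixes I :: "'i set" and A :: "'i \<Rightarrow> 'a set" and R :: "'i \<Rightarrow> 'a rel"
  assumes "finite I"
    and "\<forall>i\<in>I. finite (A i) \<and> partial_order_on (A i) (R i)"
    and "symmetric_series (\<lambda>m. \<Sum>i\<in>I. K_poset (A i) (R i) m)"
  shows "p_positive (\<lambda>m. \<Sum>i\<in>I. K_poset (A i) (R i) m)"
proof -
  define F where "F = (\<lambda>m. \<Sum>i\<in>I. K_poset (A i) (R i) m)"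
  have "in_power_sum_span F"
    using symmetric_series_in_power_sum_span assms bounded_support_sum_K_poset
    unfolding F_def by blast
  then obtain S c where S: "finite S" "\<forall>lam\<in>S. is_partition lam"
    and F: "F = (\<lambda>m. \<Sum>lam\<in>S. c lam * power_sum_part lam m)"
    unfolding in_power_sum_span_def by blast
  have posets: "\<forall>i\<in>I. finite (A i) \<and> trans (R i)"
    using assms(2) by (auto dest: partial_order_onD(2))
  have "c mu \<ge> 0" if mu: "mu \<in> S" for mu
  proof (rule power_sum_coeff_nonneg[OF S F mu])
    have "\<forall>a\<in>set (sorted_list_of_multiset mu). a > 0"
      using S(2) mu by (auto simp: is_partition_def intro: Nat.gr0I)
    then show "p_functional (sorted_list_of_multiset mu) (\<lambda>b. F (comp_monomial 0 b)) \<ge> 0"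
      unfolding F_def by (rule p_functional_sum_K_poset_nonneg[OF posets])
  qed
  with S F show ?thesis unfolding p_positive_def F_def[symmetric] by blast
qed

end
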